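(* Let $c>0$, $\theta_k>0$, $T_{\rm TDMA}>0$ and $0<\tau_k^{\max}<T_{\rm TDMA}$ be constants, and let $\varepsilon(\tau)=e^{-c\tau}$. Consider the problem (P6) $$\min_{\tau_k}\ \tau_k-\frac{1}{\theta_k}\log\!\left(1-\varepsilon(\tau_k)e^{\theta_k T_{\rm TDMA}}\right)\quad\text{s.t.}\quad 0\le\tau_k\le\tau_k^{\max}.$$ Then the optimal transmission time is $$\tau_k^{\rm opt}=\min\left(\tau_k^{\max},\ \widetilde\tau_k\right),\qquad\text{where}\qquad \widetilde\tau_k=\frac{1}{c}\log\!\left(1+\frac{c}{\theta_k}\right)+\frac{\theta_k}{c}T_{\rm TDMA}.$$
   Context: Setting: source $k$ in a TDMA system with frame length $T_{\rm TDMA}$ is allocated transmission time $\tau_k$ per frame; a transmission fails with probability $\varepsilon(\tau_k)=e^{-c\tau_k}$, and $\theta_k$ is the AoI exponent. The objective is considered on the set where it is defined, i.e. where $\varepsilon(\tau_k)e^{\theta_k T_{\rm TDMA}}<1$ (the condition for the moment generating function of the peak age to exist). *)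

theory Defs
  imports Complex_Main
begin

definition eps :: "real \<Rightarrow> real \<Rightarrow> real" where
  "eps c tau = exp (- c * tau)"

definition obj_P6 :: "real \<Rightarrow> real \<Rightarrow> real \<Rightarrow> real \<Rightarrow> real" where
  "obj_P6 c theta T tau = tau - (1 / theta) * ln (1 - eps c tau * exp (theta * T))"

text \<open>Feasible set of (P6), restricted to where the objective is defined.\<close>
definition feas_P6 :: "real \<Rightarrow> real \<Rightarrow> real \<Rightarrow> real \<Rightarrow> real set" where
  "feas_P6 c theta T taumax =
     {tau. 0 \<le> tau \<and> tau \<le> taumax \<and> eps c tau * exp (theta * T) < 1}"

end

theory Submission
  imports Defs
begin

text \<open>With \<open>u = exp (\<theta> T - c \<tau>)\<close> the objective is \<open>\<tau> - ln (1 - u) / \<theta>\<close>, whose derivative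
  \<open>1 - c u / (\<theta> (1 - u))\<close> has the sign of \<open>\<theta> - (\<theta> + c) u\<close>. As \<open>u\<close> decreases in \<open>\<tau>\<close>, the
  objective decreases up to the point where \<open>u = \<theta> / (\<theta> + c)\<close>, which is \<open>\<tau> = \<tau>\<^sup>~\<close>, and increases
  afterwards. The feasible set is the interval \<open>(\<theta> T / c, \<tau>\<^sup>m\<^sup>a\<^sup>x]\<close> and \<open>\<tau>\<^sup>~ > \<theta> T / c\<close>, so the
  unique minimiser over it is \<open>min \<tau>\<^sup>m\<^sup>a\<^sup>x \<tau>\<^sup>~\<close>.\<close>

lemma strict_unimodal_argmin:
  fixes f :: "real \<Rightarrow> real"
  assumes dec: "strict_antimono_on {a<..m} f" and inc: "strict_mono_on {m..} f"
    and "a < m" "a < b" "t \<in> {a<..b}" "t \<noteq> min b m"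
  shows "f (min b m) < f t"
proof (cases "t < min b m")
  case True
  then show ?thesis
    using assms by (intro monotone_onD[OF dec]) auto
next
  case False
  with assms have "min b m = m" "m < t"
    by (auto simp: min_def split: if_splits)
  then show ?thesis
    by (metis atLeast_iff inc less_imp_le order_refl strict_mono_onD)
qed

definition stationary_time :: "real \<Rightarrow> real \<Rightarrow> real \<Rightarrow> real" where
  "stationary_time c theta T = (1 / c) * ln (1 + c / theta) + (theta / c) * T"

lemma stationary_time_gt:
  assumes "c > 0" "theta > 0"
  shows "theta * T / c < stationary_time c theta T"
proof -
  have "0 < ln (1 + c / theta)"
    using assms by (simp add: ln_gt_zero)
  with assms show ?thesis
    by (simp add: stationary_time_def field_simps)
qed

lemma eps_mult_exp: "eps c t * exp (theta * T) = exp (theta * T - c * t)"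
  by (simp add: eps_def exp_add[symmetric])

lemma feas_P6_eq:
  assumes "c > 0" "theta > 0" "T > 0"
  shows "feas_P6 c theta T taumax = {theta * T / c<..taumax}"
proof -
  have dom_iff: "theta * T < c * t \<longleftrightarrow> theta * T / c < t" for t
    using \<open>c > 0\<close> by (simp add: pos_divide_less_eq mult.commute)
  have "0 < theta * T / c"
    using assms by simp
  then show ?thesis
    unfolding feas_P6_def eps_mult_exp by (force simp: dom_iff)
qed

lemma has_real_derivative_obj_P6:
  assumes "theta * T < c * t"
  defines "u \<equiv> exp (theta * T - c * t)"
  shows "(obj_P6 c theta T has_real_derivative 1 - c * u / (theta * (1 - u))) (at t)"
proof -
  have "u < 1"
    using assms by simp
  have "((\<lambda>t. 1 - exp (theta * T - c * t)) has_real_derivative c * u) (at t)"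
    unfolding u_def by (auto intro!: derivative_eq_intros)
  then have "((\<lambda>t. ln (1 - exp (theta * T - c * t))) has_real_derivative c * u / (1 - u)) (at t)"
    using \<open>u < 1\<close> unfolding u_def by (auto intro!: derivative_eq_intros simp: field_simps)
  from DERIV_diff[OF DERIV_ident DERIV_cmult[OF this, of "1 / theta"]]
  have "((\<lambda>t. t - (1 / theta) * ln (1 - exp (theta * T - c * t)))
      has_real_derivative 1 - c * u / (theta * (1 - u))) (at t)"
    by simp
  moreover have "obj_P6 c theta T = (\<lambda>t. t - (1 / theta) * ln (1 - exp (theta * T - c * t)))"
    by (intro ext) (simp add: obj_P6_def eps_mult_exp)
  ultimately show ?thesis
    by simp
qed

lemma isCont_obj_P6:
  assumes "theta * T < c * t"
  shows "isCont (obj_P6 c theta T) t"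
  using has_real_derivative_obj_P6[OF assms] by (rule DERIV_isCont)

lemma obj_P6_deriv_sign:
  assumes "c > 0" "theta > 0" "theta * T < c * t"
  defines "u \<equiv> exp (theta * T - c * t)"
  shows "0 < 1 - c * u / (theta * (1 - u)) \<longleftrightarrow> stationary_time c theta T < t"
    and "1 - c * u / (theta * (1 - u)) < 0 \<longleftrightarrow> t < stationary_time c theta T"
proof -
  have "u < 1"
    using assms by (simp add: u_def)
  then have deriv_eq: "1 - c * u / (theta * (1 - u)) = (theta - (theta + c) * u) / (theta * (1 - u))"
    using assms by (simp add: field_simps)
  have "0 < 1 + c / theta"
    using assms by (simp add: add_pos_pos)
  have "c * stationary_time c theta T = ln (1 + c / theta) + theta * T"
    using assms by (simp add: stationary_time_def field_simps)
  then have "exp (theta * T - c * stationary_time c theta T) = 1 / (1 + c / theta)"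
    using \<open>0 < 1 + c / theta\<close> by (simp add: exp_minus inverse_eq_divide)
  then have stationary_u: "theta / (theta + c) = exp (theta * T - c * stationary_time c theta T)"
    using assms by (simp add: field_simps)
  have "(theta + c) * u < theta \<longleftrightarrow> u < theta / (theta + c)"
    using assms by (simp add: pos_less_divide_eq mult.commute)
  also have "\<dots> \<longleftrightarrow> stationary_time c theta T < t"
    using stationary_u \<open>c > 0\<close> by (simp add: u_def)
  finally have below: "(theta + c) * u < theta \<longleftrightarrow> stationary_time c theta T < t" .
  have "theta < (theta + c) * u \<longleftrightarrow> theta / (theta + c) < u"
    using assms by (simp add: pos_divide_less_eq mult.commute)
  also have "\<dots> \<longleftrightarrow> t < stationary_time c theta T"
    using stationary_u \<open>c > 0\<close> by (simp add: u_def)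
  finally have above: "theta < (theta + c) * u \<longleftrightarrow> t < stationary_time c theta T" .
  have "0 < theta * (1 - u)"
    using assms \<open>u < 1\<close> by simp
  with below above show "0 < 1 - c * u / (theta * (1 - u)) \<longleftrightarrow> stationary_time c theta T < t"
    and "1 - c * u / (theta * (1 - u)) < 0 \<longleftrightarrow> t < stationary_time c theta T"
    unfolding deriv_eq by (simp_all add: zero_less_divide_iff divide_less_0_iff)
qed

lemma obj_P6_strict_mono_on:
  assumes "c > 0" "theta > 0"
  shows "strict_mono_on {stationary_time c theta T..} (obj_P6 c theta T)"
proof (rule strict_mono_onI)
  fix x y
  assume "x \<in> {stationary_time c theta T..}" "y \<in> {stationary_time c theta T..}" "x < y"
  then have x: "stationary_time c theta T \<le> x" and "x < y"
    by auto
  have dom: "theta * T < c * z" if "stationary_time c theta T \<le> z" for z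
  proof -
    have "theta * T / c < z"
      using stationary_time_gt[OF assms, of T] that by linarith
    then show ?thesis
      using \<open>c > 0\<close> by (simp add: pos_divide_less_eq mult.commute)
  qed
  show "obj_P6 c theta T x < obj_P6 c theta T y"
  proof (rule DERIV_pos_imp_increasing_open[OF \<open>x < y\<close>])
    fix z
    assume "x < z" "z < y"
    then show "\<exists>d. (obj_P6 c theta T has_real_derivative d) (at z) \<and> 0 < d"
      using x dom[of z] has_real_derivative_obj_P6 obj_P6_deriv_sign(1)[OF assms] by force
  next
    show "continuous_on {x..y} (obj_P6 c theta T)"
      using x dom by (intro continuous_at_imp_continuous_on ballI isCont_obj_P6) auto
  qed
qed

lemma obj_P6_strict_antimono_on:
  assumes "c > 0" "theta > 0"
  shows "strict_antimono_on {theta * T / c<..stationary_time c theta T} (obj_P6 c theta T)"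
proof (rule monotone_onI)
  fix x y
  assume "x \<in> {theta * T / c<..stationary_time c theta T}"
    "y \<in> {theta * T / c<..stationary_time c theta T}" "x < y"
  then have x: "theta * T / c < x" and y: "y \<le> stationary_time c theta T" and "x < y"
    by auto
  have dom: "theta * T < c * z" if "theta * T / c < z" for z
    using that \<open>c > 0\<close> by (simp add: pos_divide_less_eq mult.commute)
  show "obj_P6 c theta T y < obj_P6 c theta T x"
  proof (rule DERIV_neg_imp_decreasing_open[OF \<open>x < y\<close>])
    fix z
    assume "x < z" "z < y"
    then show "\<exists>d. (obj_P6 c theta T has_real_derivative d) (at z) \<and> d < 0"
      using x y dom[of z] has_real_derivative_obj_P6 obj_P6_deriv_sign(2)[OF assms] by force
  next
    show "continuous_on {x..y} (obj_P6 c theta T)"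
      using x dom by (intro continuous_at_imp_continuous_on ballI isCont_obj_P6) auto
  qed
qed

theorem theorem2:
  fixes c theta T taumax :: real
  assumes "c > 0" and "theta > 0" and "T > 0"
    and "0 < taumax" and "taumax < T"
    and "feas_P6 c theta T taumax \<noteq> {}"
  shows "let tau_tilde = (1 / c) * ln (1 + c / theta) + (theta / c) * T;
             tau_opt = min taumax tau_tilde
         in tau_opt \<in> feas_P6 c theta T taumax \<and>
            (\<forall>tau \<in> feas_P6 c theta T taumax.
               tau \<noteq> tau_opt \<longrightarrow> obj_P6 c theta T tau_opt < obj_P6 c theta T tau)"
proof -
  have feas: "feas_P6 c theta T taumax = {theta * T / c<..taumax}"
    using assms(1-3) by (rule feas_P6_eq)
  with assms(6) have "theta * T / c < taumax"
    by simp
  moreover have "theta * T / c < stationary_time c theta T"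
    using assms(1,2) by (rule stationary_time_gt)
  ultimately show ?thesis
    unfolding Let_def feas stationary_time_def[symmetric]
    using strict_unimodal_argmin[OF obj_P6_strict_antimono_on obj_P6_strict_mono_on] assms(1,2)
    by auto
qed

end
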